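(* Let $G$ be a finitely presentable group with no elements of order two. Then there exists a finite presentation $\Pi$ of $G$ such that $\ell(\Pi)=T(G)$ and every relator of $\Pi$ has length at least three; consequently $T_1(G)\le\ell_1(\Pi)\le 3\ell(\Pi)=3T(G)$. In particular, \[ T(G)\le T_1(G)\le 3T(G). \]
   Context: For a finite presentation $\Pi=\langle X\mid R\rangle$: $\ell(\Pi)=\sum_{r\in R}\max\{|r|-2,0\}$ and $\ell_1(\Pi)=\sum_{r\in R}|r|$. For a finitely presentable group $G$: $T(G)=\min\{\ell(\Pi)\}$ and $T_1(G)=\min\{\ell_1(\Pi)\}$, the minima taken over all finite presentations $\Pi$ of $G$. *)

theory Defs
  imports "HOL-Algebra.Algebra"
begin

text \<open>Letters of a free group on generators from nat: (a, True) is the generator a,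
  (a, False) is its inverse.  Words are lists of letters.\<close>

type_synonym letter = "nat \<times> bool"
type_synonym word = "letter list"

definition letter_inv :: "letter \<Rightarrow> letter" where
  "letter_inv l = (fst l, \<not> snd l)"

definition word_inv :: "word \<Rightarrow> word" where
  "word_inv w = rev (map letter_inv w)"

definition words_on :: "nat set \<Rightarrow> word set" where
  "words_on Xs = {w. fst ` set w \<subseteq> Xs}"

type_synonym presentation = "nat set \<times> word set"

definition is_fin_presentation :: "presentation \<Rightarrow> bool" where
  "is_fin_presentation P \<longleftrightarrow> finite (fst P) \<and> finite (snd P) \<and> snd P \<subseteq> words_on (fst P)"

text \<open>Words representing elements of the normal closure of R in the free group on Xs
  (closed under free insertion/cancellation of inverse pairs).\<close>

inductive_set ncl :: "nat set \<Rightarrow> word set \<Rightarrow> word set" for Xs R where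
  nil: "[] \<in> ncl Xs R"
| rel: "r \<in> R \<Longrightarrow> r \<in> ncl Xs R"
| invw: "w \<in> ncl Xs R \<Longrightarrow> word_inv w \<in> ncl Xs R"
| app: "u \<in> ncl Xs R \<Longrightarrow> v \<in> ncl Xs R \<Longrightarrow> u @ v \<in> ncl Xs R"
| conj: "w \<in> ncl Xs R \<Longrightarrow> fst l \<in> Xs \<Longrightarrow> l # w @ [letter_inv l] \<in> ncl Xs R"
| ins: "u @ v \<in> ncl Xs R \<Longrightarrow> fst l \<in> Xs \<Longrightarrow> u @ [l, letter_inv l] @ v \<in> ncl Xs R"
| del: "u @ [l, letter_inv l] @ v \<in> ncl Xs R \<Longrightarrow> u @ v \<in> ncl Xs R"

definition pres_rel :: "presentation \<Rightarrow> (word \<times> word) set" where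
  "pres_rel P = {(u, v). u \<in> words_on (fst P) \<and> v \<in> words_on (fst P)
                          \<and> u @ word_inv v \<in> ncl (fst P) (snd P)}"

definition presented_group :: "presentation \<Rightarrow> word set monoid" where
  "presented_group P =
     \<lparr> carrier = words_on (fst P) // pres_rel P,
       monoid.mult = (\<lambda>A B. pres_rel P `` {(SOME a. a \<in> A) @ (SOME b. b \<in> B)}),
       one = pres_rel P `` {[]} \<rparr>"

definition presents :: "('g, 'b) monoid_scheme \<Rightarrow> presentation \<Rightarrow> bool" where
  "presents G P \<longleftrightarrow> is_fin_presentation P \<and> G \<cong> presented_group P"

definition finitely_presentable :: "('g, 'b) monoid_scheme \<Rightarrow> bool" where
  "finitely_presentable G \<longleftrightarrow> (\<exists>P. presents G P)"

text \<open>ell(P) = sum over relators of max(|r|-2, 0) (truncated nat subtraction), and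
  ell_1(P) = sum of relator lengths.\<close>

definition ell :: "presentation \<Rightarrow> nat" where
  "ell P = (\<Sum>r\<in>snd P. length r - 2)"

definition ell1 :: "presentation \<Rightarrow> nat" where
  "ell1 P = (\<Sum>r\<in>snd P. length r)"

definition T_inv :: "('g, 'b) monoid_scheme \<Rightarrow> nat" where
  "T_inv G = (LEAST n. \<exists>P. presents G P \<and> ell P = n)"

definition T1_inv :: "('g, 'b) monoid_scheme \<Rightarrow> nat" where
  "T1_inv G = (LEAST n. \<exists>P. presents G P \<and> ell1 P = n)"

definition no_order_two :: "('g, 'b) monoid_scheme \<Rightarrow> bool" where
  "no_order_two G \<longleftrightarrow> (\<forall>x\<in>carrier G. x \<otimes>\<^bsub>G\<^esub> x = \<one>\<^bsub>G\<^esub> \<longrightarrow> x = \<one>\<^bsub>G\<^esub>)"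

end

theory Submission
  imports Defs
begin

text \<open>Start from a presentation realising T(G) and, among the presentations of G with
  \<open>\<ell>\<close> at most T(G), take one with the fewest generators plus relators.  A relator r of
  length at most two is then impossible: if r is empty or freely trivial it can be deleted;
  otherwise it says that some generator x equals a word w of length at most one in the other
  generators (for r = a a this uses that G has no element of order two, so a = 1).
  Substituting w for x everywhere removes the generator x, does not lengthen any relator and
  does not increase the number of relators.  So every relator has length at least three,
  whence |r| \<le> 3 (|r| - 2) termwise and \<open>\<ell>\<^sub>1 \<le> 3 \<ell>\<close>; and \<open>\<ell> \<le> \<ell>\<^sub>1\<close> always.\<close>

section \<open>Words and normal closures\<close>

lemma letter_inv_letter_inv [simp]: "letter_inv (letter_inv l) = l"
  by (simp add: letter_inv_def)

lemma fst_letter_inv [simp]: "fst (letter_inv l) = fst l"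
  by (simp add: letter_inv_def)

lemma word_inv_Nil [simp]: "word_inv [] = []"
  by (simp add: word_inv_def)

lemma word_inv_Cons [simp]: "word_inv (a # u) = word_inv u @ [letter_inv a]"
  by (simp add: word_inv_def)

lemma word_inv_append [simp]: "word_inv (u @ v) = word_inv v @ word_inv u"
  by (simp add: word_inv_def)

lemma word_inv_word_inv [simp]: "word_inv (word_inv u) = u"
  by (simp add: word_inv_def rev_map comp_def)

lemma length_word_inv [simp]: "length (word_inv u) = length u"
  by (simp add: word_inv_def)

lemma Nil_in_words_on [simp]: "[] \<in> words_on Xs"
  by (simp add: words_on_def)

lemma Cons_in_words_on [simp]: "a # u \<in> words_on Xs \<longleftrightarrow> fst a \<in> Xs \<and> u \<in> words_on Xs"
  by (simp add: words_on_def)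

lemma append_in_words_on [simp]: "u @ v \<in> words_on Xs \<longleftrightarrow> u \<in> words_on Xs \<and> v \<in> words_on Xs"
  by (auto simp add: words_on_def)

lemma word_inv_in_words_on [simp]: "word_inv u \<in> words_on Xs \<longleftrightarrow> u \<in> words_on Xs"
  by (auto simp add: words_on_def word_inv_def image_image)

lemma words_on_mono: "A \<subseteq> B \<Longrightarrow> u \<in> words_on A \<Longrightarrow> u \<in> words_on B"
  by (auto simp add: words_on_def)

lemma ncl_conj_word: "w \<in> ncl Xs R \<Longrightarrow> t \<in> words_on Xs \<Longrightarrow> t @ w @ word_inv t \<in> ncl Xs R"
proof (induction t)
  case (Cons a t)
  then have "a # (t @ w @ word_inv t) @ [letter_inv a] \<in> ncl Xs R"
    by (intro ncl.conj) auto
  then show ?case by simp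
qed simp

lemma ncl_insert_cancelling:
  "x @ y \<in> ncl Xs R \<Longrightarrow> t \<in> words_on Xs \<Longrightarrow> x @ t @ word_inv t @ y \<in> ncl Xs R"
proof (induction t arbitrary: x y)
  case (Cons a t)
  have "x @ [a, letter_inv a] @ y \<in> ncl Xs R"
    using Cons.prems by (intro ncl.ins) auto
  then have "(x @ [a]) @ t @ word_inv t @ ([letter_inv a] @ y) \<in> ncl Xs R"
    using Cons by (intro Cons.IH) auto
  then show ?case by simp
qed simp

lemma ncl_delete_cancelling: "x @ t @ word_inv t @ y \<in> ncl Xs R \<Longrightarrow> x @ y \<in> ncl Xs R"
proof (induction t arbitrary: x y)
  case (Cons a t)
  have "(x @ [a]) @ t @ word_inv t @ ([letter_inv a] @ y) \<in> ncl Xs R"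
    using Cons.prems by simp
  then have "x @ [a, letter_inv a] @ y \<in> ncl Xs R"
    using Cons.IH by fastforce
  then show ?case by (rule ncl.del)
qed simp

lemma ncl_delete_cancelling': "x @ word_inv t @ t @ y \<in> ncl Xs R \<Longrightarrow> x @ y \<in> ncl Xs R"
  using ncl_delete_cancelling[of x "word_inv t" y] by simp

lemma word_word_inv_in_ncl: "t \<in> words_on Xs \<Longrightarrow> t @ word_inv t \<in> ncl Xs R"
  using ncl_insert_cancelling[of "[]" "[]" Xs R t] by (simp add: ncl.nil)

lemma ncl_mono: "w \<in> ncl Xs R \<Longrightarrow> Xs \<subseteq> Xs' \<Longrightarrow> R \<subseteq> ncl Xs' R' \<Longrightarrow> w \<in> ncl Xs' R'"
proof (induction rule: ncl.induct)
  case (ins u v l)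
  then show ?case using ncl.ins[of u v Xs' R' l] by auto
qed (auto intro: ncl.intros)

lemma ncl_insert_consequence: "r \<in> ncl Xs R \<Longrightarrow> ncl Xs (insert r R) = ncl Xs R"
  using ncl_mono[of _ Xs "insert r R" Xs R] ncl_mono[of _ Xs R Xs "insert r R"]
  by (auto intro: ncl.rel)

section \<open>The presented group\<close>

lemma in_pres_rel:
  "(u, v) \<in> pres_rel (Xs, R) \<longleftrightarrow> u \<in> words_on Xs \<and> v \<in> words_on Xs \<and> u @ word_inv v \<in> ncl Xs R"
  by (simp add: pres_rel_def)

lemma pres_rel_refl: "u \<in> words_on Xs \<Longrightarrow> (u, u) \<in> pres_rel (Xs, R)"
  by (simp add: in_pres_rel word_word_inv_in_ncl)

lemma pres_rel_sym: "(u, v) \<in> pres_rel (Xs, R) \<Longrightarrow> (v, u) \<in> pres_rel (Xs, R)"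
  unfolding in_pres_rel using ncl.invw by fastforce

lemma pres_rel_trans:
  assumes "(u, v) \<in> pres_rel (Xs, R)" "(v, w) \<in> pres_rel (Xs, R)"
  shows "(u, w) \<in> pres_rel (Xs, R)"
proof -
  have "u @ word_inv v @ v @ word_inv w \<in> ncl Xs R"
    using assms ncl.app by (fastforce simp: in_pres_rel)
  then have "u @ word_inv w \<in> ncl Xs R"
    by (rule ncl_delete_cancelling')
  then show ?thesis using assms by (simp add: in_pres_rel)
qed

lemma pres_rel_append:
  assumes u: "(u, u') \<in> pres_rel (Xs, R)" and v: "(v, v') \<in> pres_rel (Xs, R)"
  shows "(u @ v, u' @ v') \<in> pres_rel (Xs, R)"
proof -
  have "u @ (v @ word_inv v') @ word_inv u \<in> ncl Xs R"
    using u v by (intro ncl_conj_word) (simp_all add: in_pres_rel)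
  then have "(u @ v @ word_inv v') @ word_inv u @ u @ word_inv u' \<in> ncl Xs R"
    using u ncl.app by (fastforce simp: in_pres_rel)
  then have "(u @ v @ word_inv v') @ word_inv u' \<in> ncl Xs R"
    by (rule ncl_delete_cancelling')
  then show ?thesis using u v by (simp add: in_pres_rel)
qed

lemma pres_rel_word_inv:
  assumes "(u, v) \<in> pres_rel (Xs, R)"
  shows "(word_inv u, word_inv v) \<in> pres_rel (Xs, R)"
proof -
  have "word_inv u @ (v @ word_inv u) @ u \<in> ncl Xs R"
    using assms ncl_conj_word[of "v @ word_inv u" Xs R "word_inv u"] ncl.invw
    by (fastforce simp: in_pres_rel)
  then have "(word_inv u @ v) @ [] \<in> ncl Xs R"
    using ncl_delete_cancelling'[of "word_inv u @ v" u "[]"] by simp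
  then show ?thesis using assms by (simp add: in_pres_rel)
qed

lemma equiv_pres_rel: "equiv (words_on Xs) (pres_rel (Xs, R))"
  unfolding equiv_def refl_on_def sym_def trans_def
  by (auto simp: pres_rel_refl intro: pres_rel_sym pres_rel_trans) (auto simp: in_pres_rel)

lemma pres_class_eq_iff:
  "u \<in> words_on Xs \<Longrightarrow> v \<in> words_on Xs \<Longrightarrow>
     pres_rel (Xs, R) `` {u} = pres_rel (Xs, R) `` {v} \<longleftrightarrow> (u, v) \<in> pres_rel (Xs, R)"
  using equiv_class_eq_iff[OF equiv_pres_rel, of u v] by simp

lemma carrier_presented_group:
  "carrier (presented_group (Xs, R)) = words_on Xs // pres_rel (Xs, R)"
  by (simp add: presented_group_def)

lemma one_presented_group: "\<one>\<^bsub>presented_group (Xs, R)\<^esub> = pres_rel (Xs, R) `` {[]}"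
  by (simp add: presented_group_def)

lemma mult_presented_group:
  assumes u: "u \<in> words_on Xs" and v: "v \<in> words_on Xs"
  shows "pres_rel (Xs, R) `` {u} \<otimes>\<^bsub>presented_group (Xs, R)\<^esub> pres_rel (Xs, R) `` {v}
           = pres_rel (Xs, R) `` {u @ v}"
proof -
  let ?a = "SOME a. a \<in> pres_rel (Xs, R) `` {u}" and ?b = "SOME b. b \<in> pres_rel (Xs, R) `` {v}"
  have "?a \<in> pres_rel (Xs, R) `` {u}" "?b \<in> pres_rel (Xs, R) `` {v}"
    using u v by (auto intro!: someI pres_rel_refl)
  then have "(?a @ ?b, u @ v) \<in> pres_rel (Xs, R)"
    by (auto intro: pres_rel_append pres_rel_sym)
  then have "pres_rel (Xs, R) `` {?a @ ?b} = pres_rel (Xs, R) `` {u @ v}"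
    by (rule equiv_class_eq[OF equiv_pres_rel])
  then show ?thesis by (simp add: presented_group_def)
qed

lemma presented_group_carrierI:
  "u \<in> words_on Xs \<Longrightarrow> pres_rel (Xs, R) `` {u} \<in> carrier (presented_group (Xs, R))"
  unfolding carrier_presented_group by (rule quotientI)

lemma presented_group_carrierE:
  assumes "A \<in> carrier (presented_group (Xs, R))"
  obtains u where "u \<in> words_on Xs" "A = pres_rel (Xs, R) `` {u}"
  using assms unfolding carrier_presented_group by (auto elim!: quotientE)

lemma presented_group_cong: "ncl Xs R = ncl Xs R' \<Longrightarrow> presented_group (Xs, R) = presented_group (Xs, R')"
  by (simp add: presented_group_def pres_rel_def)

lemma group_presented_group: "group (presented_group (Xs, R))"
proof (rule groupI)
  let ?G = "presented_group (Xs, R)"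
  fix A B C
  assume A: "A \<in> carrier ?G"
  then obtain u where u: "u \<in> words_on Xs" "A = pres_rel (Xs, R) `` {u}"
    by (rule presented_group_carrierE)
  show "\<one>\<^bsub>?G\<^esub> \<otimes>\<^bsub>?G\<^esub> A = A"
    using u by (simp add: one_presented_group mult_presented_group)
  have "pres_rel (Xs, R) `` {word_inv u} \<otimes>\<^bsub>?G\<^esub> A = \<one>\<^bsub>?G\<^esub>"
    using u word_word_inv_in_ncl[of "word_inv u" Xs R]
    by (simp add: one_presented_group mult_presented_group pres_class_eq_iff in_pres_rel)
  then show "\<exists>B \<in> carrier ?G. B \<otimes>\<^bsub>?G\<^esub> A = \<one>\<^bsub>?G\<^esub>"
    using u word_inv_in_words_on presented_group_carrierI by blast
  assume B: "B \<in> carrier ?G"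
  then obtain v where v: "v \<in> words_on Xs" "B = pres_rel (Xs, R) `` {v}"
    by (rule presented_group_carrierE)
  show "A \<otimes>\<^bsub>?G\<^esub> B \<in> carrier ?G"
    using u v by (simp add: mult_presented_group presented_group_carrierI)
  assume "C \<in> carrier ?G"
  then obtain w where w: "w \<in> words_on Xs" "C = pres_rel (Xs, R) `` {w}"
    by (rule presented_group_carrierE)
  show "A \<otimes>\<^bsub>?G\<^esub> B \<otimes>\<^bsub>?G\<^esub> C = A \<otimes>\<^bsub>?G\<^esub> (B \<otimes>\<^bsub>?G\<^esub> C)"
    using u v w by (simp add: mult_presented_group)
next
  show "\<one>\<^bsub>presented_group (Xs, R)\<^esub> \<in> carrier (presented_group (Xs, R))"
    by (simp add: one_presented_group presented_group_carrierI)
qed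

lemma presented_group_iso_by_word_map:
  assumes s_words: "\<And>u. u \<in> words_on Xs \<Longrightarrow> s u \<in> words_on Ys"
    and s_append: "\<And>u v. s (u @ v) = s u @ s v"
    and s_pres_rel_iff: "\<And>u v. u \<in> words_on Xs \<Longrightarrow> v \<in> words_on Xs \<Longrightarrow>
          (s u, s v) \<in> pres_rel (Ys, S) \<longleftrightarrow> (u, v) \<in> pres_rel (Xs, R)"
    and s_onto: "\<And>v. v \<in> words_on Ys \<Longrightarrow> \<exists>u \<in> words_on Xs. s u = v"
  shows "presented_group (Xs, R) \<cong> presented_group (Ys, S)"
proof -
  let ?G = "presented_group (Xs, R)" and ?H = "presented_group (Ys, S)"
  let ?cG = "\<lambda>u. pres_rel (Xs, R) `` {u}" and ?cH = "\<lambda>v. pres_rel (Ys, S) `` {v}"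
  define h where "h A = pres_rel (Ys, S) `` (s ` A)" for A
  have h_class: "h (?cG u) = ?cH (s u)" if u: "u \<in> words_on Xs" for u
  proof
    show "h (?cG u) \<subseteq> ?cH (s u)"
    proof
      fix y assume "y \<in> h (?cG u)"
      then obtain a where ua: "(u, a) \<in> pres_rel (Xs, R)" and ay: "(s a, y) \<in> pres_rel (Ys, S)"
        by (auto simp: h_def)
      have "(s u, s a) \<in> pres_rel (Ys, S)"
        using ua s_pres_rel_iff[of u a] by (simp add: in_pres_rel[of u a])
      then show "y \<in> ?cH (s u)"
        using ay pres_rel_trans by blast
    qed
    show "?cH (s u) \<subseteq> h (?cG u)"
      using u pres_rel_refl by (fastforce simp: h_def)
  qed
  have "h \<in> hom ?G ?H"
  proof (rule homI)
    fix A B assume "A \<in> carrier ?G" "B \<in> carrier ?G"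
    then obtain u v where "u \<in> words_on Xs" "A = ?cG u" "v \<in> words_on Xs" "B = ?cG v"
      by (meson presented_group_carrierE)
    then show "h A \<in> carrier ?H" "h (A \<otimes>\<^bsub>?G\<^esub> B) = h A \<otimes>\<^bsub>?H\<^esub> h B"
      by (simp_all add: h_class s_words s_append mult_presented_group presented_group_carrierI)
  qed
  moreover have "bij_betw h (carrier ?G) (carrier ?H)"
  proof (rule bij_betw_imageI)
    show "inj_on h (carrier ?G)"
    proof (rule inj_onI)
      fix A B assume "A \<in> carrier ?G" "B \<in> carrier ?G" "h A = h B"
      then obtain u v where "u \<in> words_on Xs" "A = ?cG u" "v \<in> words_on Xs" "B = ?cG v"
        "?cH (s u) = ?cH (s v)"
        by (metis presented_group_carrierE h_class)
      then show "A = B"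
        by (simp add: pres_class_eq_iff s_words s_pres_rel_iff)
    qed
    show "h ` carrier ?G = carrier ?H"
    proof
      show "h ` carrier ?G \<subseteq> carrier ?H"
        using \<open>h \<in> hom ?G ?H\<close> by (auto simp: hom_def)
      show "carrier ?H \<subseteq> h ` carrier ?G"
      proof
        fix B assume "B \<in> carrier ?H"
        then obtain u where "u \<in> words_on Xs" "B = ?cH (s u)"
          by (metis presented_group_carrierE s_onto)
        then show "B \<in> h ` carrier ?G"
          by (metis h_class image_eqI presented_group_carrierI)
      qed
    qed
  qed
  ultimately show ?thesis
    by (auto simp: is_iso_def iso_def)
qed

section \<open>Tietze elimination of a generator\<close>

definition subst_letter :: "nat \<Rightarrow> word \<Rightarrow> letter \<Rightarrow> word" where
  "subst_letter x w l = (if fst l = x then (if snd l then w else word_inv w) else [l])"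

definition subst_word :: "nat \<Rightarrow> word \<Rightarrow> word \<Rightarrow> word" where
  "subst_word x w u = concat (map (subst_letter x w) u)"

lemma subst_word_Nil [simp]: "subst_word x w [] = []"
  by (simp add: subst_word_def)

lemma subst_word_Cons [simp]: "subst_word x w (l # u) = subst_letter x w l @ subst_word x w u"
  by (simp add: subst_word_def)

lemma subst_word_append [simp]: "subst_word x w (u @ v) = subst_word x w u @ subst_word x w v"
  by (simp add: subst_word_def)

lemma subst_letter_letter_inv: "subst_letter x w (letter_inv l) = word_inv (subst_letter x w l)"
  by (auto simp: subst_letter_def letter_inv_def)

lemma subst_word_word_inv [simp]: "subst_word x w (word_inv u) = word_inv (subst_word x w u)"
  by (induction u) (auto simp: subst_letter_letter_inv)

lemma subst_letter_in_words_on: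
  "fst l \<in> Xs \<Longrightarrow> w \<in> words_on (Xs - {x}) \<Longrightarrow> subst_letter x w l \<in> words_on (Xs - {x})"
  by (simp add: subst_letter_def)

lemma subst_word_in_words_on:
  "u \<in> words_on Xs \<Longrightarrow> w \<in> words_on (Xs - {x}) \<Longrightarrow> subst_word x w u \<in> words_on (Xs - {x})"
  by (induction u) (auto simp: subst_letter_in_words_on)

lemma subst_word_id: "u \<in> words_on (Xs - {x}) \<Longrightarrow> subst_word x w u = u"
  by (induction u) (auto simp: subst_letter_def)

lemma length_subst_word_le: "length w \<le> 1 \<Longrightarrow> length (subst_word x w u) \<le> length u"
  by (induction u) (auto simp: subst_letter_def)

lemma subst_word_in_ncl:
  assumes "u \<in> ncl Xs R" "w \<in> words_on (Xs - {x})"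
  shows "subst_word x w u \<in> ncl (Xs - {x}) (subst_word x w ` R)"
  using assms
proof (induction rule: ncl.induct)
  case (conj u l)
  then show ?case
    using ncl_conj_word[OF _ subst_letter_in_words_on] by (simp add: subst_letter_letter_inv)
next
  case (ins u v l)
  then show ?case
    using ncl_insert_cancelling[OF _ subst_letter_in_words_on] by (simp add: subst_letter_letter_inv)
next
  case (del u l v)
  then show ?case
    using ncl_delete_cancelling[of "subst_word x w u" "subst_letter x w l"]
    by (simp add: subst_letter_letter_inv)
qed (auto intro: ncl.intros)

lemma pres_rel_subst_word:
  assumes xw: "([(x, True)], w) \<in> pres_rel (Xs, R)" and u: "u \<in> words_on Xs"
  shows "(u, subst_word x w u) \<in> pres_rel (Xs, R)"
  using u
proof (induction u)
  case Nil
  then show ?case by (simp add: pres_rel_refl)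
next
  case (Cons l u)
  have "([l], subst_letter x w l) \<in> pres_rel (Xs, R)"
  proof (cases "fst l = x")
    case True
    then consider "l = (x, True)" | "l = letter_inv (x, True)"
      by (cases l) (auto simp: letter_inv_def)
    then show ?thesis
      using xw pres_rel_word_inv[OF xw] True by cases (simp_all add: subst_letter_def letter_inv_def)
  next
    case False
    then show ?thesis using Cons.prems by (simp add: subst_letter_def pres_rel_refl)
  qed
  then show ?case
    using pres_rel_append Cons by fastforce
qed

lemma presented_group_eliminate_generator:
  assumes R: "R \<subseteq> words_on Xs" and xw: "([(x, True)], w) \<in> pres_rel (Xs, R)"
    and w: "w \<in> words_on (Xs - {x})"
  shows "presented_group (Xs, R) \<cong> presented_group (Xs - {x}, subst_word x w ` R)"
proof (rule presented_group_iso_by_word_map)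
  let ?s = "subst_word x w" and ?S = "subst_word x w ` R"
  have s_equiv: "(u, ?s u) \<in> pres_rel (Xs, R)" if "u \<in> words_on Xs" for u
    using pres_rel_subst_word[OF xw that] .
  have "?S \<subseteq> ncl Xs R"
  proof
    fix r assume "r \<in> ?S"
    then obtain r0 where r0: "r0 \<in> R" "r = ?s r0" by blast
    then have "(?s r0, r0) \<in> pres_rel (Xs, R)" "(r0, []) \<in> pres_rel (Xs, R)"
      using R s_equiv by (auto intro: pres_rel_sym ncl.rel simp: in_pres_rel[of r0])
    then have "(r, []) \<in> pres_rel (Xs, R)"
      using r0 pres_rel_trans by blast
    then show "r \<in> ncl Xs R"
      by (simp add: in_pres_rel)
  qed
  then have "(?s u, ?s v) \<in> pres_rel (Xs - {x}, ?S) \<Longrightarrow> (?s u, ?s v) \<in> pres_rel (Xs, R)" for u v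
    using words_on_mono[of "Xs - {x}" Xs] ncl_mono[of _ "Xs - {x}" ?S Xs R]
    by (auto simp: in_pres_rel)
  moreover have "(u, v) \<in> pres_rel (Xs, R) \<Longrightarrow> (?s u, ?s v) \<in> pres_rel (Xs - {x}, ?S)" for u v
    using subst_word_in_ncl[of "u @ word_inv v" Xs R w x] w
    by (auto simp: in_pres_rel subst_word_in_words_on)
  ultimately show "(?s u, ?s v) \<in> pres_rel (Xs - {x}, ?S) \<longleftrightarrow> (u, v) \<in> pres_rel (Xs, R)"
    if "u \<in> words_on Xs" "v \<in> words_on Xs" for u v
    using that s_equiv by (meson pres_rel_sym pres_rel_trans)
  show "?s u \<in> words_on (Xs - {x})" if "u \<in> words_on Xs" for u
    using that w by (rule subst_word_in_words_on)
  show "?s (u @ v) = ?s u @ ?s v" for u v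
    by simp
  show "\<exists>u \<in> words_on Xs. ?s u = v" if "v \<in> words_on (Xs - {x})" for v
    using that subst_word_id words_on_mono[of "Xs - {x}" Xs] by blast
qed

section \<open>Relators of length at most two\<close>

lemma no_order_two_iso:
  assumes "group G" "group H" "G \<cong> H" "no_order_two G"
  shows "no_order_two H"
  unfolding no_order_two_def
proof (intro ballI impI)
  fix e assume e: "e \<in> carrier H" "e \<otimes>\<^bsub>H\<^esub> e = \<one>\<^bsub>H\<^esub>"
  obtain k where k: "k \<in> iso H G"
    using group.iso_sym[OF assms(1,3)] by (auto simp: is_iso_def)
  then have hom: "k \<in> hom H G" and inj: "inj_on k (carrier H)"
    by (auto simp: iso_def bij_betw_def)
  have "k e \<otimes>\<^bsub>G\<^esub> k e = \<one>\<^bsub>G\<^esub>"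
    using e hom hom_mult[OF hom] hom_one[OF hom assms(2,1)] by metis
  then have "k e = k \<one>\<^bsub>H\<^esub>"
    using assms e hom hom_one[OF hom assms(2,1)]
    by (auto simp: no_order_two_def hom_def)
  then show "e = \<one>\<^bsub>H\<^esub>"
    using inj e group.is_monoid[OF assms(2)] by (auto dest: inj_onD)
qed

lemma ncl_square_root:
  assumes "no_order_two (presented_group (Xs, R))" "fst a \<in> Xs" "[a, a] \<in> ncl Xs R"
  shows "[a] \<in> ncl Xs R"
proof -
  let ?c = "\<lambda>u. pres_rel (Xs, R) `` {u}"
  have a: "[a] \<in> words_on Xs" using assms(2) by simp
  have "?c [a] \<otimes>\<^bsub>presented_group (Xs, R)\<^esub> ?c [a] = ?c [a, a]"
    using mult_presented_group[OF a a] by simp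
  also have "\<dots> = \<one>\<^bsub>presented_group (Xs, R)\<^esub>"
    using assms(2,3) by (simp add: one_presented_group pres_class_eq_iff in_pres_rel)
  finally have "?c [a] = ?c []"
    using assms(1) a presented_group_carrierI by (auto simp: no_order_two_def one_presented_group)
  then show ?thesis
    using a by (simp add: pres_class_eq_iff in_pres_rel)
qed

lemma generator_equals_short_word:
  assumes "([l], w) \<in> pres_rel (Xs, R)" "w \<in> words_on (Xs - {fst l})"
  shows "\<exists>w'. w' \<in> words_on (Xs - {fst l}) \<and> length w' = length w
           \<and> ([(fst l, True)], w') \<in> pres_rel (Xs, R)"
proof (cases "snd l")
  case True
  then show ?thesis using assms by (intro exI[of _ w]) (cases l, simp)
next
  case False
  then have "word_inv [l] = [(fst l, True)]"
    by (cases l) (simp add: letter_inv_def)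
  then show ?thesis
    using assms pres_rel_word_inv[OF assms(1)] by (intro exI[of _ "word_inv w"]) simp
qed

lemma short_relator_cases:
  assumes R: "R \<subseteq> words_on Xs" and r: "r \<in> R" "length r < 3"
    and no2: "no_order_two (presented_group (Xs, R))"
  obtains "r \<in> ncl Xs (R - {r})"
    | x w where "w \<in> words_on (Xs - {x})" "length w \<le> 1" "([(x, True)], w) \<in> pres_rel (Xs, R)"
proof -
  have r_ncl: "r \<in> ncl Xs R" and r_words: "r \<in> words_on Xs"
    using r R by (auto intro: ncl.rel)
  note redundant = that(1) and short_word = that(2)
  have eliminable: thesis if "([l], w) \<in> pres_rel (Xs, R)" "w \<in> words_on (Xs - {fst l})"
    "length w \<le> 1" for l w
    using generator_equals_short_word[OF that(1,2)] that(3) short_word by (metis (no_types))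
  consider "r = []" | a where "r = [a]" | a c where "r = [a, c]"
    using r(2) by (auto simp: numeral_3_eq_3 less_Suc_eq length_Suc_conv)
  then show thesis
  proof cases
    case 1
    then show thesis using redundant ncl.nil by simp
  next
    case (2 a)
    then show thesis
      using eliminable[of a "[]"] r_ncl r_words by (simp add: in_pres_rel)
  next
    case (3 a c)
    then have a: "fst a \<in> Xs" and c: "fst c \<in> Xs"
      using r_words by auto
    consider "c = letter_inv a" | "c = a" | "fst c \<noteq> fst a"
      by (cases a, cases c) (auto simp: letter_inv_def)
    then show thesis
    proof cases
      case 1
      then have "[] @ [a, letter_inv a] @ [] \<in> ncl Xs (R - {r})"
        using a ncl.nil by (intro ncl.ins) simp_all
      then show thesis using redundant 1 \<open>r = [a, c]\<close> by simp
    next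
      case 2
      then have "[a] \<in> ncl Xs R"
        using ncl_square_root[OF no2 a] r_ncl \<open>r = [a, c]\<close> by simp
      then show thesis
        using eliminable[of a "[]"] a by (simp add: in_pres_rel)
    next
      case 3
      then show thesis
        using eliminable[of a "[letter_inv c]"] r_ncl a c \<open>r = [a, c]\<close> by (simp add: in_pres_rel)
    qed
  qed
qed

lemma presents_remove_relator:
  "presents G (Xs, R) \<Longrightarrow> r \<in> R \<Longrightarrow> r \<in> ncl Xs (R - {r}) \<Longrightarrow> presents G (Xs, R - {r})"
  using presented_group_cong[of Xs "R - {r}" R] ncl_insert_consequence[of r Xs "R - {r}"]
  by (auto simp: presents_def is_fin_presentation_def insert_absorb)

lemma presents_eliminate_generator:
  assumes "presents G (Xs, R)" "w \<in> words_on (Xs - {x})" "([(x, True)], w) \<in> pres_rel (Xs, R)"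
  shows "presents G (Xs - {x}, subst_word x w ` R)"
proof -
  have R: "finite Xs" "finite R" "R \<subseteq> words_on Xs" and G: "G \<cong> presented_group (Xs, R)"
    using assms(1) by (auto simp: presents_def is_fin_presentation_def)
  have "G \<cong> presented_group (Xs - {x}, subst_word x w ` R)"
    using iso_trans[OF G presented_group_eliminate_generator[OF R(3) assms(3,2)]] .
  moreover have "subst_word x w ` R \<subseteq> words_on (Xs - {x})"
    using R(3) subst_word_in_words_on[OF _ assms(2)] by blast
  ultimately show ?thesis
    using R by (simp add: presents_def is_fin_presentation_def)
qed

lemma ell_remove_relator_le: "finite R \<Longrightarrow> ell (Xs, R - {r}) \<le> ell (Xs, R)"
  by (simp add: ell_def sum_mono2)

lemma ell_subst_word_le:
  assumes "finite R" "length w \<le> 1"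
  shows "ell (Ys, subst_word x w ` R) \<le> ell (Xs, R)"
proof -
  let ?f = "\<lambda>r::word. length r - 2"
  have "ell (Ys, subst_word x w ` R) \<le> sum (?f \<circ> subst_word x w) R"
    unfolding ell_def snd_conv using assms(1) by (intro sum_image_le) auto
  also have "\<dots> \<le> sum ?f R"
    using length_subst_word_le[OF assms(2)] by (intro sum_mono) (simp add: diff_le_mono)
  finally show ?thesis by (simp add: ell_def)
qed

lemma shorten_presentation:
  assumes "presents G (Xs, R)" "group G" "no_order_two G" "r \<in> R" "length r < 3"
  shows "\<exists>P. presents G P \<and> ell P \<le> ell (Xs, R) \<and> card (fst P) + card (snd P) < card Xs + card R"
proof -
  have fin: "finite Xs" "finite R" "R \<subseteq> words_on Xs" and G: "G \<cong> presented_group (Xs, R)"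
    using assms(1) by (auto simp: presents_def is_fin_presentation_def)
  have "no_order_two (presented_group (Xs, R))"
    using no_order_two_iso[OF assms(2) group_presented_group G assms(3)] .
  with fin(3) assms(4,5) show ?thesis
  proof (cases rule: short_relator_cases)
    case 1
    then show ?thesis
      using presents_remove_relator[OF assms(1,4)] ell_remove_relator_le[OF fin(2)]
        card_Diff1_less[OF fin(2) assms(4)]
      by (intro exI[of _ "(Xs, R - {r})"]) simp
  next
    case (2 x w)
    then have "x \<in> Xs" by (simp add: in_pres_rel)
    then have "card (Xs - {x}) + card (subst_word x w ` R) < card Xs + card R"
      using card_Diff1_less[OF fin(1)] card_image_le[OF fin(2)] by (meson add_less_le_mono)
    then show ?thesis
      using presents_eliminate_generator[OF assms(1) 2(1,3)] ell_subst_word_le[OF fin(2) 2(2)]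
      by (intro exI[of _ "(Xs - {x}, subst_word x w ` R)"]) simp
  qed
qed

section \<open>Presentations with long relators\<close>

lemma presentation_with_long_relators:
  assumes "group G" "no_order_two G" "presents G P"
  shows "\<exists>Q. presents G Q \<and> ell Q \<le> ell P \<and> (\<forall>r \<in> snd Q. 3 \<le> length r)"
  using assms(3)
proof (induction "card (fst P) + card (snd P)" arbitrary: P rule: less_induct)
  case less
  show ?case
  proof (cases "\<forall>r \<in> snd P. 3 \<le> length r")
    case True
    then show ?thesis using less.prems by blast
  next
    case False
    then obtain r where "r \<in> snd P" "length r < 3" by force
    then obtain P' where "presents G P'" "ell P' \<le> ell P"
      "card (fst P') + card (snd P') < card (fst P) + card (snd P)"
      using shorten_presentation[of G "fst P" "snd P" r] less.prems assms(1,2) by auto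
    then show ?thesis
      using less.hyps by (meson order_trans)
  qed
qed

lemma ell_le_ell1: "ell P \<le> ell1 P"
  unfolding ell_def ell1_def by (rule sum_mono) simp

lemma ell1_le_3_ell: "\<forall>r \<in> snd P. 3 \<le> length r \<Longrightarrow> ell1 P \<le> 3 * ell P"
  unfolding ell_def ell1_def sum_distrib_left by (rule sum_mono) auto

lemma T_inv_le: "presents G P \<Longrightarrow> T_inv G \<le> ell P"
  unfolding T_inv_def by (rule Least_le) blast

lemma T1_inv_le: "presents G P \<Longrightarrow> T1_inv G \<le> ell1 P"
  unfolding T1_inv_def by (rule Least_le) blast

lemma T_inv_attained: "finitely_presentable G \<Longrightarrow> \<exists>P. presents G P \<and> ell P = T_inv G"
  unfolding T_inv_def finitely_presentable_def by (rule LeastI_ex) blast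

lemma T1_inv_attained: "finitely_presentable G \<Longrightarrow> \<exists>P. presents G P \<and> ell1 P = T1_inv G"
  unfolding T1_inv_def finitely_presentable_def by (rule LeastI_ex) blast

theorem lemma5p2:
  fixes G :: "('g, 'b) monoid_scheme"
  assumes "group G"
    and "finitely_presentable G"
    and "no_order_two G"
  shows "\<exists>P. presents G P \<and> ell P = T_inv G \<and> (\<forall>r\<in>snd P. length r \<ge> 3)
             \<and> T1_inv G \<le> ell1 P \<and> ell1 P \<le> 3 * ell P
             \<and> T_inv G \<le> T1_inv G \<and> T1_inv G \<le> 3 * T_inv G"
proof -
  obtain P0 where "presents G P0" "ell P0 = T_inv G"
    using T_inv_attained[OF assms(2)] by blast
  then obtain P where P: "presents G P" "ell P \<le> T_inv G" and long: "\<forall>r \<in> snd P. 3 \<le> length r"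
    using presentation_with_long_relators[OF assms(1,3)] by metis
  have "ell P = T_inv G"
    using P T_inv_le[OF P(1)] by simp
  moreover obtain Q where "presents G Q" "ell1 Q = T1_inv G"
    using T1_inv_attained[OF assms(2)] by blast
  then have "T_inv G \<le> T1_inv G"
    using T_inv_le ell_le_ell1 order_trans by metis
  ultimately show ?thesis
    using P(1) long T1_inv_le[OF P(1)] ell1_le_3_ell[OF long] by (intro exI[of _ P]) auto
qed

end
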